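(* Let $f_\theta$ be any map that assigns to each integer linear program $\min_{\mathbf{x}}\{\mathbf{c}^\top\mathbf{x}\mid \mathbf{A}\mathbf{x}\le\mathbf{b},\ \mathbf{x}\in\mathbb{Z}^n\}$ (given via its bipartite representation $\mathcal{A}=\begin{bmatrix}\mathbf{A}&\mathbf{b}\\ \mathbf{c}^\top&0\end{bmatrix}\in\mathbb{R}^{(m+1)\times(n+1)}$) a vector $f_\theta(\mathcal{A})\in\mathbb{R}^n$, and which satisfies $f_\theta(\pi^c(\mathcal{A}))=\pi^v(f_\theta(\mathcal{A}))$ for all $\pi\in S_n$ and $f_\theta(\sigma^r(\mathcal{A}))=f_\theta(\mathcal{A})$ for all $\sigma\in S_m$. Then $f_\theta$ cannot always correctly predict an optimal solution of ILP instances with formulation symmetries: there exists an ILP instance possessing a nontrivial formulation symmetry such that $f_\theta(\mathcal{A})$ is not an optimal solution of that instance.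
   Context: $S_n$ is the set of permutations of $\{1,\dots,n\}$. For $\pi\in S_n$: $\pi^v(\mathbf{y})=[y_{\pi(1)},\dots,y_{\pi(n)},y_{n+1},\dots]^\top$ permutes the top-most $n$ entries of a vector; $\pi^r$ permutes the top-most $n$ rows of a matrix as $[\mathbf{X}_{\pi(1),:},\dots,\mathbf{X}_{\pi(n),:},\mathbf{X}_{n+1,:},\dots]^\top$; $\pi^c$ permutes the left-most $n$ columns as $[\mathbf{X}_{:,\pi(1)},\dots,\mathbf{X}_{:,\pi(n)},\mathbf{X}_{:,n+1},\dots]$; analogously for $\sigma\in S_m$. A permutation $\pi\in S_n$ is a formulation symmetry of the ILP if there exists $\sigma\in S_m$ with $\pi^v(\mathbf{c})=\mathbf{c}$, $\sigma^v(\mathbf{b})=\mathbf{b}$, and $A_{\sigma(i),\pi(j)}=A_{i,j}$ for all $i,j$. *)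

theory Defs
  imports "Jordan_Normal_Form.Matrix" "HOL-Combinatorics.Permutations"
begin

definition bip :: "real mat \<Rightarrow> real vec \<Rightarrow> real vec \<Rightarrow> real mat" where
  "bip A b c = mat (dim_row A + 1) (dim_col A + 1)
     (\<lambda>(i,j). if i < dim_row A \<and> j < dim_col A then A $$ (i,j)
             else if i < dim_row A then b $ i
             else if j < dim_col A then c $ j else 0)"

text \<open>pi^c, sigma^r, pi^v (the permutations are of {0..<n} resp. {0..<m}, identity elsewhere).\<close>
definition col_perm :: "(nat \<Rightarrow> nat) \<Rightarrow> real mat \<Rightarrow> real mat" where
  "col_perm \<pi> M = mat (dim_row M) (dim_col M) (\<lambda>(i,j). M $$ (i, \<pi> j))"

definition row_perm :: "(nat \<Rightarrow> nat) \<Rightarrow> real mat \<Rightarrow> real mat" where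
  "row_perm \<sigma> M = mat (dim_row M) (dim_col M) (\<lambda>(i,j). M $$ (\<sigma> i, j))"

definition vec_perm :: "(nat \<Rightarrow> nat) \<Rightarrow> real vec \<Rightarrow> real vec" where
  "vec_perm \<pi> v = vec (dim_vec v) (\<lambda>j. v $ \<pi> j)"

definition ilp_feasible :: "real mat \<Rightarrow> real vec \<Rightarrow> real vec \<Rightarrow> bool" where
  "ilp_feasible A b x \<longleftrightarrow> dim_vec x = dim_col A \<and> (\<forall>j < dim_col A. x $ j \<in> \<int>)
      \<and> (\<forall>i < dim_row A. (A *\<^sub>v x) $ i \<le> b $ i)"

definition ilp_optimal :: "real mat \<Rightarrow> real vec \<Rightarrow> real vec \<Rightarrow> real vec \<Rightarrow> bool" where
  "ilp_optimal A b c x \<longleftrightarrow> ilp_feasible A b x \<and> (\<forall>y. ilp_feasible A b y \<longrightarrow> c \<bullet> x \<le> c \<bullet> y)"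

definition formulation_symmetry :: "real mat \<Rightarrow> real vec \<Rightarrow> real vec \<Rightarrow> (nat \<Rightarrow> nat) \<Rightarrow> bool" where
  "formulation_symmetry A b c \<pi> \<longleftrightarrow> \<pi> permutes {..<dim_col A} \<and>
     (\<exists>\<sigma>. \<sigma> permutes {..<dim_row A} \<and>
        (\<forall>j < dim_col A. c $ (\<pi> j) = c $ j) \<and>
        (\<forall>i < dim_row A. b $ (\<sigma> i) = b $ i) \<and>
        (\<forall>i < dim_row A. \<forall>j < dim_col A. A $$ (\<sigma> i, \<pi> j) = A $$ (i, j)))"

end

theory Submission
  imports Defs
begin

(* The ILP  min 0  s.t.  x1 + x2 = 1,  x integer,  is invariant under swapping its two
   variables, and the swap fixes its bipartite representation without any row permutation.
   Column equivariance then forces the prediction to have two equal coordinates, but no integer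
   point with x1 = x2 satisfies x1 + x2 = 1. *)

lemma col_perm_bip_eq:
  assumes "\<pi> permutes {..<dim_col A}"
    and "\<And>j. j < dim_col A \<Longrightarrow> c $ \<pi> j = c $ j"
    and "\<And>i j. i < dim_row A \<Longrightarrow> j < dim_col A \<Longrightarrow> A $$ (i, \<pi> j) = A $$ (i, j)"
  shows "col_perm \<pi> (bip A b c) = bip A b c"
proof (rule eq_matI)
  fix i j assume i: "i < dim_row (bip A b c)" and j: "j < dim_col (bip A b c)"
  show "col_perm \<pi> (bip A b c) $$ (i, j) = bip A b c $$ (i, j)"
  proof (cases "j < dim_col A")
    case True
    then have "\<pi> j < dim_col A"
      using assms(1) by (metis lessThan_iff permutes_in_image)
    with True i j show ?thesis
      using assms(2,3) by (auto simp: col_perm_def bip_def)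
  next
    case False
    then have "\<pi> j = j"
      using assms(1) by (simp add: permutes_not_in)
    with i j show ?thesis by (simp add: col_perm_def)
  qed
qed (simp_all add: col_perm_def)

lemma vec_perm_fixed_nth:
  assumes "vec_perm \<pi> v = v" and "j < dim_vec v"
  shows "v $ \<pi> j = v $ j"
  using arg_cong[where f = "\<lambda>w. w $ j", OF assms(1)] assms(2) by (simp add: vec_perm_def)

lemma ilp_optimal_zero_cost:
  "ilp_optimal A b (0\<^sub>v (dim_col A)) x \<longleftrightarrow> ilp_feasible A b x"
  by (auto simp: ilp_optimal_def ilp_feasible_def scalar_prod_def)

definition pair_sum_mat :: "real mat" where
  "pair_sum_mat = mat 2 2 (\<lambda>(i, j). if i = 0 then 1 else -1)"

definition pair_sum_rhs :: "real vec" where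
  "pair_sum_rhs = vec 2 (\<lambda>i. if i = 0 then 1 else -1)"

lemma pair_sum_dims [simp]:
  "dim_row pair_sum_mat = 2" "dim_col pair_sum_mat = 2" "dim_vec pair_sum_rhs = 2"
  by (simp_all add: pair_sum_mat_def pair_sum_rhs_def)

lemma pair_sum_mult_vec:
  assumes "dim_vec x = 2"
  shows "(pair_sum_mat *\<^sub>v x) $ 0 = x $ 0 + x $ 1" "(pair_sum_mat *\<^sub>v x) $ 1 = - x $ 0 - x $ 1"
  using assms by (auto simp: pair_sum_mat_def mult_mat_vec_def scalar_prod_def row_def
      numeral_2_eq_2 lessThan_Suc)

lemma pair_sum_feasible_iff:
  "ilp_feasible pair_sum_mat pair_sum_rhs x \<longleftrightarrow>
     dim_vec x = 2 \<and> x $ 0 \<in> \<int> \<and> x $ 1 \<in> \<int> \<and> x $ 0 + x $ 1 = 1"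
  using pair_sum_mult_vec[of x]
  by (auto simp: ilp_feasible_def pair_sum_rhs_def less_2_cases_iff all_conj_distrib)

lemma pair_sum_feasible_coords_neq:
  assumes "ilp_feasible pair_sum_mat pair_sum_rhs x"
  shows "x $ 0 \<noteq> x $ 1"
proof
  assume eq: "x $ 0 = x $ 1"
  from assms obtain k :: int where "x $ 0 = of_int k" and "x $ 0 + x $ 1 = 1"
    by (auto simp: pair_sum_feasible_iff elim: Ints_cases)
  with eq have "of_int (2 * k) = (of_int 1 :: real)" by simp
  then have "2 * k = 1" by (simp only: of_int_eq_iff)
  then show False by presburger
qed

lemma pair_sum_has_optimum: "ilp_optimal pair_sum_mat pair_sum_rhs (0\<^sub>v 2) (unit_vec 2 0)"
  using ilp_optimal_zero_cost[of pair_sum_mat] by (simp add: pair_sum_feasible_iff)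

lemma swap_permutes_pair: "Transposition.transpose 0 1 permutes {..<2::nat}"
  by (rule permutes_swap_id) auto

lemma pair_sum_swap_invariant:
  "i < 2 \<Longrightarrow> j < 2 \<Longrightarrow> pair_sum_mat $$ (i, Transposition.transpose 0 1 j) = pair_sum_mat $$ (i, j)"
  by (auto simp: pair_sum_mat_def less_2_cases_iff)

lemma pair_sum_swap_symmetry:
  "formulation_symmetry pair_sum_mat pair_sum_rhs (0\<^sub>v 2) (Transposition.transpose 0 1)"
  unfolding formulation_symmetry_def
  using swap_permutes_pair pair_sum_swap_invariant
  by (intro conjI exI[of _ id]) (auto simp: less_2_cases_iff)

theorem corollary1:
  fixes f :: "real mat \<Rightarrow> real vec"
  assumes dim: "\<And>A b c. dim_vec b = dim_row A \<Longrightarrow> dim_vec c = dim_col A \<Longrightarrow>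
                  dim_vec (f (bip A b c)) = dim_col A"
    and col_equiv: "\<And>A b c \<pi>. dim_vec b = dim_row A \<Longrightarrow> dim_vec c = dim_col A \<Longrightarrow>
                  \<pi> permutes {..<dim_col A} \<Longrightarrow>
                  f (col_perm \<pi> (bip A b c)) = vec_perm \<pi> (f (bip A b c))"
    and row_inv: "\<And>A b c \<sigma>. dim_vec b = dim_row A \<Longrightarrow> dim_vec c = dim_col A \<Longrightarrow>
                  \<sigma> permutes {..<dim_row A} \<Longrightarrow>
                  f (row_perm \<sigma> (bip A b c)) = f (bip A b c)"
  shows "\<exists>A b c. dim_vec b = dim_row A \<and> dim_vec c = dim_col A \<and>
           (\<exists>\<pi>. \<pi> \<noteq> id \<and> formulation_symmetry A b c \<pi>) \<and>
           (\<exists>x. ilp_optimal A b c x) \<and>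
           \<not> ilp_optimal A b c (f (bip A b c))"
proof -
  let ?\<tau> = "Transposition.transpose (0::nat) 1"
  let ?y = "f (bip pair_sum_mat pair_sum_rhs (0\<^sub>v 2))"
  have dims: "dim_vec pair_sum_rhs = dim_row pair_sum_mat" "dim_vec (0\<^sub>v 2) = dim_col pair_sum_mat"
    by simp_all
  have "col_perm ?\<tau> (bip pair_sum_mat pair_sum_rhs (0\<^sub>v 2)) = bip pair_sum_mat pair_sum_rhs (0\<^sub>v 2)"
    using swap_permutes_pair pair_sum_swap_invariant
    by (intro col_perm_bip_eq) (auto simp: less_2_cases_iff)
  then have "vec_perm ?\<tau> ?y = ?y"
    using col_equiv[OF dims, of ?\<tau>] swap_permutes_pair by simp
  then have "?y $ 1 = ?y $ 0"
    using vec_perm_fixed_nth[of ?\<tau> ?y 0] dim[OF dims] by simp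
  then have "\<not> ilp_optimal pair_sum_mat pair_sum_rhs (0\<^sub>v 2) ?y"
    using pair_sum_feasible_coords_neq ilp_optimal_zero_cost[of pair_sum_mat] by force
  moreover have "?\<tau> \<noteq> id"
    by (metis id_apply transpose_apply_first zero_neq_one)
  ultimately show ?thesis
    using dims pair_sum_swap_symmetry pair_sum_has_optimum by blast
qed

end
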